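(* Let $N$ be finite, $\mathbf P$ stochastic on $N$, $0<\beta<1$, $\mathbf R\in\mathbb R^N$, $S\subseteq N$. Let $(a_i)_{i\in N}$ and $(b_i)_{i\in N}$ be the unique solutions of $$a_i=\beta R_i+\beta\sum_{j\in S}p_{ij}a_j,\qquad b_i=\beta+\beta\sum_{j\in S}p_{ij}b_j,\qquad i\in N.$$ Then $a_i=\beta r_i^S/(1-\beta)$ and $b_i=\beta w_i^S/(1-\beta)$ for $i\in S$, and $a_i=\beta r_i^S$, $b_i=\beta w_i^S$ for $i\in S^c$. In particular $a_i/b_i=\nu_i^S$ for all $i\in N$.
   Context: $N$ finite, $\mathbf P=(p_{ij})$ stochastic, $\beta\in(0,1)$, $\mathbf R=(R_j)$; $X(t)$ the Markov chain with matrix $\mathbf P$, $\mathsf E_i$ expectation given $X(0)=i$, $S^c=N\setminus S$. For $S\subseteq N$, $\tau_S=\min\{t\ge0:X(t)\notin S\}$, $f_i^S=\mathsf{E}_i[\sum_{t=0}^{\tau_S-1}R_{X(t)}\beta^t]$, $g_i^S=\mathsf{E}_i[\sum_{t=0}^{\tau_S-1}\beta^t]$, $w_i^S=1+\beta\sum_jp_{ij}g_j^S-\beta g_i^S$, $r_i^S=R_i+\beta\sum_jp_{ij}f_j^S-\beta f_i^S$, $\nu_i^S=r_i^S/w_i^S$. *)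

theory Defs
  imports "HOL-Analysis.Analysis"
begin

definition stochastic :: "('n::finite \<Rightarrow> 'n \<Rightarrow> real) \<Rightarrow> bool" where
  "stochastic P \<longleftrightarrow> (\<forall>i j. 0 \<le> P i j) \<and> (\<forall>i. (\<Sum>j\<in>UNIV. P i j) = 1)"

text \<open>stay P S t i j = P_i(X(0),...,X(t) all lie in S and X(t) = j), i.e. P_i(t < tau_S, X(t) = j).\<close>
fun stay :: "('n::finite \<Rightarrow> 'n \<Rightarrow> real) \<Rightarrow> 'n set \<Rightarrow> nat \<Rightarrow> 'n \<Rightarrow> 'n \<Rightarrow> real" where
  "stay P S 0 i j = (if i \<in> S \<and> j = i then 1 else 0)"
| "stay P S (Suc t) i j = (if j \<in> S then (\<Sum>k\<in>UNIV. stay P S t i k * P k j) else 0)"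

text \<open>f_i^S = E_i[ sum_{t < tau_S} R_{X(t)} beta^t ] = sum_t beta^t E_i[R_{X(t)} 1{t < tau_S}].\<close>
definition fS :: "('n::finite \<Rightarrow> 'n \<Rightarrow> real) \<Rightarrow> real \<Rightarrow> ('n \<Rightarrow> real) \<Rightarrow> 'n set \<Rightarrow> 'n \<Rightarrow> real" where
  "fS P \<beta> R S i = (\<Sum>t. \<beta> ^ t * (\<Sum>j\<in>UNIV. stay P S t i j * R j))"

definition gS :: "('n::finite \<Rightarrow> 'n \<Rightarrow> real) \<Rightarrow> real \<Rightarrow> 'n set \<Rightarrow> 'n \<Rightarrow> real" where
  "gS P \<beta> S i = (\<Sum>t. \<beta> ^ t * (\<Sum>j\<in>UNIV. stay P S t i j))"

definition wS :: "('n::finite \<Rightarrow> 'n \<Rightarrow> real) \<Rightarrow> real \<Rightarrow> 'n set \<Rightarrow> 'n \<Rightarrow> real" where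
  "wS P \<beta> S i = 1 + \<beta> * (\<Sum>j\<in>UNIV. P i j * gS P \<beta> S j) - \<beta> * gS P \<beta> S i"

definition rS :: "('n::finite \<Rightarrow> 'n \<Rightarrow> real) \<Rightarrow> real \<Rightarrow> ('n \<Rightarrow> real) \<Rightarrow> 'n set \<Rightarrow> 'n \<Rightarrow> real" where
  "rS P \<beta> R S i = R i + \<beta> * (\<Sum>j\<in>UNIV. P i j * fS P \<beta> R S j) - \<beta> * fS P \<beta> R S i"

definition nuS :: "('n::finite \<Rightarrow> 'n \<Rightarrow> real) \<Rightarrow> real \<Rightarrow> ('n \<Rightarrow> real) \<Rightarrow> 'n set \<Rightarrow> 'n \<Rightarrow> real" where
  "nuS P \<beta> R S i = rS P \<beta> R S i / wS P \<beta> S i"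

end

theory Submission
  imports Defs
begin

text \<open>
  The occupation sum \<open>f\<^sup>S\<close> satisfies the first-step equation
  \<open>f\<^sub>i = R\<^sub>i + \<beta> \<Sum>\<^sub>j p\<^sub>i\<^sub>j f\<^sub>j\<close> for \<open>i \<in> S\<close> and vanishes off \<open>S\<close>; hence
  \<open>r\<^sub>i\<^sup>S = (1 - \<beta>) f\<^sub>i\<close> on \<open>S\<close>, and \<open>a\<^sub>i = \<beta> (R\<^sub>i + \<beta> \<Sum>\<^sub>j p\<^sub>i\<^sub>j f\<^sub>j)\<close> solves the
  equation for \<open>a\<close>. The difference \<open>e\<close> of two solutions satisfies \<open>e = \<beta> P\<^sub>S e\<close>, and
  at a state maximising \<open>|e|\<close> this gives \<open>|e| \<le> \<beta> |e|\<close>, so solutions are unique.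
  The equation for \<open>b\<close> is the one for \<open>a\<close> with \<open>R = 1\<close>, which turns \<open>f\<^sup>S, r\<^sup>S\<close>
  into \<open>g\<^sup>S, w\<^sup>S\<close>.
\<close>

lemma stochastic_nonneg: "stochastic P \<Longrightarrow> 0 \<le> P i j"
  by (simp add: stochastic_def)

lemma stochastic_row_sum: "stochastic P \<Longrightarrow> (\<Sum>j\<in>UNIV. P i j) = 1"
  by (simp add: stochastic_def)

lemma stay_nonneg: "stochastic P \<Longrightarrow> 0 \<le> stay P S t i j"
  by (induction t arbitrary: j) (auto simp: stochastic_nonneg intro!: sum_nonneg)

lemma stay_row_sum_le_1:
  assumes "stochastic P"
  shows "(\<Sum>j\<in>UNIV. stay P S t i j) \<le> 1"
proof (induction t)
  case 0
  show ?case by (cases "i \<in> S") simp_all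
next
  case (Suc t)
  have "(\<Sum>j\<in>UNIV. stay P S (Suc t) i j) \<le> (\<Sum>j\<in>UNIV. \<Sum>k\<in>UNIV. stay P S t i k * P k j)"
    using assms by (intro sum_mono) (auto simp: stochastic_nonneg stay_nonneg intro!: sum_nonneg)
  also have "\<dots> = (\<Sum>k\<in>UNIV. stay P S t i k * (\<Sum>j\<in>UNIV. P k j))"
    by (subst sum.swap) (simp add: sum_distrib_left)
  also have "\<dots> = (\<Sum>k\<in>UNIV. stay P S t i k)"
    using assms by (simp add: stochastic_row_sum)
  finally show ?case using Suc by simp
qed

lemma stay_Suc_first:
  "stay P S (Suc t) i j = (if i \<in> S then (\<Sum>k\<in>UNIV. P i k * stay P S t k j) else 0)"
proof (induction t arbitrary: j)
  case 0
  have "stay P S 0 k j = (if k = j then of_bool (j \<in> S) else 0)" for k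
    by auto
  then have "(\<Sum>k\<in>UNIV. P i k * stay P S 0 k j) = (if j \<in> S then P i j else 0)"
    by (simp add: if_distrib[where f="\<lambda>x. _ * x"] cong: if_cong)
  then show ?case
    by (auto simp: if_distrib[where f="\<lambda>x. x * _"] cong: if_cong)
next
  case (Suc t)
  then show ?case
    by (auto simp: sum_distrib_left sum_distrib_right mult.assoc intro: sum.swap)
qed

lemma stay_outside: "i \<notin> S \<Longrightarrow> stay P S t i j = 0"
  by (cases t) (simp_all add: stay_Suc_first del: stay.simps(2))

definition stay_reward :: "('n::finite \<Rightarrow> 'n \<Rightarrow> real) \<Rightarrow> 'n set \<Rightarrow> ('n \<Rightarrow> real) \<Rightarrow> nat \<Rightarrow> 'n \<Rightarrow> real"
  where "stay_reward P S R t i = (\<Sum>j\<in>UNIV. stay P S t i j * R j)"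

lemma fS_eq_suminf_stay_reward: "fS P \<beta> R S i = (\<Sum>t. \<beta> ^ t * stay_reward P S R t i)"
  unfolding fS_def stay_reward_def ..

lemma stay_reward_Suc:
  "stay_reward P S R (Suc t) i = (if i \<in> S then (\<Sum>k\<in>UNIV. P i k * stay_reward P S R t k) else 0)"
  unfolding stay_reward_def stay_Suc_first
  by (auto simp: sum_distrib_left sum_distrib_right mult.assoc intro: sum.swap)

lemma abs_stay_reward_le:
  assumes "stochastic P"
  shows "\<bar>stay_reward P S R t i\<bar> \<le> (\<Sum>k\<in>UNIV. \<bar>R k\<bar>)"
proof -
  have "\<bar>stay_reward P S R t i\<bar> \<le> (\<Sum>j\<in>UNIV. \<bar>stay P S t i j * R j\<bar>)"
    unfolding stay_reward_def by (rule sum_abs)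
  also have "\<dots> \<le> (\<Sum>j\<in>UNIV. stay P S t i j * (\<Sum>k\<in>UNIV. \<bar>R k\<bar>))"
    using stay_nonneg[OF assms]
    by (intro sum_mono) (auto simp: abs_mult intro!: mult_left_mono member_le_sum)
  also have "\<dots> = (\<Sum>j\<in>UNIV. stay P S t i j) * (\<Sum>k\<in>UNIV. \<bar>R k\<bar>)"
    by (rule sum_distrib_right[symmetric])
  also have "\<dots> \<le> (\<Sum>k\<in>UNIV. \<bar>R k\<bar>)"
    using stay_nonneg[OF assms] stay_row_sum_le_1[OF assms]
    by (intro mult_left_le_one_le sum_nonneg) auto
  finally show ?thesis .
qed

lemma summable_stay_reward:
  assumes "stochastic P" "\<bar>\<beta>\<bar> < 1"
  shows "summable (\<lambda>t. \<beta> ^ t * stay_reward P S R t i)"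
proof (rule summable_comparison_test)
  show "\<exists>N. \<forall>t\<ge>N. norm (\<beta> ^ t * stay_reward P S R t i) \<le> (\<Sum>j\<in>UNIV. \<bar>R j\<bar>) * \<bar>\<beta>\<bar> ^ t"
  proof (intro exI allI impI)
    fix t
    show "norm (\<beta> ^ t * stay_reward P S R t i) \<le> (\<Sum>j\<in>UNIV. \<bar>R j\<bar>) * \<bar>\<beta>\<bar> ^ t"
      using abs_stay_reward_le[OF assms(1), of S R t i]
      by (simp add: abs_mult power_abs mult.commute mult_left_mono)
  qed
  show "summable (\<lambda>t. (\<Sum>j\<in>UNIV. \<bar>R j\<bar>) * \<bar>\<beta>\<bar> ^ t)"
    using assms(2) by (intro summable_mult summable_geometric) auto
qed

lemma fS_outside: "i \<notin> S \<Longrightarrow> fS P \<beta> R S i = 0"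
  by (simp add: fS_def stay_outside)

lemma fS_first_step:
  assumes "stochastic P" "\<bar>\<beta>\<bar> < 1" "i \<in> S"
  shows "fS P \<beta> R S i = R i + \<beta> * (\<Sum>j\<in>UNIV. P i j * fS P \<beta> R S j)"
proof -
  note summable = summable_stay_reward[OF assms(1,2)]
  have "fS P \<beta> R S i = (\<Sum>t. \<beta> ^ Suc t * stay_reward P S R (Suc t) i) + stay_reward P S R 0 i"
    unfolding fS_eq_suminf_stay_reward by (subst suminf_split_head[OF summable]) simp
  also have "stay_reward P S R 0 i = R i"
    using assms(3) by (simp add: stay_reward_def if_distrib[where f="\<lambda>x. x * _"] cong: if_cong)
  also have "(\<Sum>t. \<beta> ^ Suc t * stay_reward P S R (Suc t) i)
      = (\<Sum>t. \<Sum>j\<in>UNIV. \<beta> * P i j * (\<beta> ^ t * stay_reward P S R t j))"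
    using assms(3) by (simp add: stay_reward_Suc sum_distrib_left mult_ac)
  also have "\<dots> = (\<Sum>j\<in>UNIV. \<Sum>t. \<beta> * P i j * (\<beta> ^ t * stay_reward P S R t j))"
    by (intro suminf_sum summable_mult summable)
  also have "\<dots> = (\<Sum>j\<in>UNIV. \<beta> * P i j * fS P \<beta> R S j)"
    unfolding fS_eq_suminf_stay_reward by (intro sum.cong refl suminf_mult summable)
  finally show ?thesis by (simp add: sum_distrib_left mult_ac)
qed

lemma discounted_homogeneous_eq_0:
  fixes e :: "'n::finite \<Rightarrow> real"
  assumes "stochastic P" "0 \<le> \<beta>" "\<beta> < 1"
    and e: "\<And>i. e i = \<beta> * (\<Sum>j\<in>S. P i j * e j)"
  shows "e i = 0"
proof -
  obtain k where k: "\<bar>e k\<bar> = Max (range (\<lambda>i. \<bar>e i\<bar>))"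
    using Max_in[of "range (\<lambda>i. \<bar>e i\<bar>)"] by fastforce
  have max: "\<bar>e j\<bar> \<le> \<bar>e k\<bar>" for j
    unfolding k by simp
  have "\<bar>\<Sum>j\<in>S. P k j * e j\<bar> \<le> (\<Sum>j\<in>S. \<bar>P k j * e j\<bar>)"
    by (rule sum_abs)
  also have "\<dots> \<le> (\<Sum>j\<in>S. P k j * \<bar>e k\<bar>)"
    using stochastic_nonneg[OF assms(1)] max by (intro sum_mono) (simp add: abs_mult mult_left_mono)
  also have "\<dots> \<le> (\<Sum>j\<in>UNIV. P k j * \<bar>e k\<bar>)"
    using stochastic_nonneg[OF assms(1)] by (intro sum_mono2) auto
  also have "\<dots> = \<bar>e k\<bar>"
    using stochastic_row_sum[OF assms(1)] by (simp flip: sum_distrib_right)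
  finally have "\<bar>e k\<bar> \<le> \<beta> * \<bar>e k\<bar>"
    using e[of k] assms(2) by (simp add: abs_mult mult_left_mono)
  then have "\<bar>e k\<bar> = 0"
    using assms(3) by (simp add: mult_le_cancel_right1)
  then show ?thesis
    using max[of i] by simp
qed

lemma rS_in_S:
  assumes "stochastic P" "\<bar>\<beta>\<bar> < 1" "i \<in> S"
  shows "rS P \<beta> R S i = (1 - \<beta>) * fS P \<beta> R S i"
  using fS_first_step[OF assms] unfolding rS_def by (simp add: algebra_simps)

lemma discounted_equation_iff:
  fixes a :: "'n::finite \<Rightarrow> real"
  assumes "stochastic P" "0 < \<beta>" "\<beta> < 1"
  shows "(\<forall>i. a i = \<beta> * R i + \<beta> * (\<Sum>j\<in>S. P i j * a j))
    \<longleftrightarrow> a = (\<lambda>i. if i \<in> S then \<beta> * rS P \<beta> R S i / (1 - \<beta>) else \<beta> * rS P \<beta> R S i)"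
proof -
  define a0 where "a0 = (\<lambda>i. if i \<in> S then \<beta> * rS P \<beta> R S i / (1 - \<beta>) else \<beta> * rS P \<beta> R S i)"
  define f where "f = fS P \<beta> R S"
  have abs_\<beta>: "\<bar>\<beta>\<bar> < 1"
    using assms(2,3) by simp
  have a0_in_S: "a0 i = \<beta> * f i" if "i \<in> S" for i
    using rS_in_S[OF assms(1) abs_\<beta> that] assms(3) that by (simp add: a0_def f_def)
  have a0_eq: "a0 i = \<beta> * (R i + \<beta> * (\<Sum>j\<in>UNIV. P i j * f j))" for i
  proof (cases "i \<in> S")
    case True
    then show ?thesis
      using a0_in_S fS_first_step[OF assms(1) abs_\<beta> True] by (simp add: f_def)
  next
    case False
    then show ?thesis
      by (simp add: a0_def rS_def f_def fS_outside)
  qed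
  have a0_solves: "a0 i = \<beta> * R i + \<beta> * (\<Sum>j\<in>S. P i j * a0 j)" for i
  proof -
    have "(\<Sum>j\<in>S. P i j * a0 j) = \<beta> * (\<Sum>j\<in>S. P i j * f j)"
      using a0_in_S by (simp add: sum_distrib_left mult.left_commute)
    also have "(\<Sum>j\<in>S. P i j * f j) = (\<Sum>j\<in>UNIV. P i j * f j)"
      by (rule sum.mono_neutral_left) (auto simp: f_def fS_outside)
    finally show ?thesis
      unfolding a0_eq[of i] by (simp add: distrib_left)
  qed
  have "a = a0" if a_solves: "\<forall>i. a i = \<beta> * R i + \<beta> * (\<Sum>j\<in>S. P i j * a j)"
  proof -
    have diff_eq: "a i - a0 i = \<beta> * (\<Sum>j\<in>S. P i j * (a j - a0 j))" for i
      using spec[OF a_solves, of i] a0_solves[of i]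
      by (simp add: right_diff_distrib sum_subtractf)
    show ?thesis
      using discounted_homogeneous_eq_0[where e="\<lambda>i. a i - a0 i", OF assms(1) _ assms(3) diff_eq] assms(2)
      by (simp add: fun_eq_iff)
  qed
  then show ?thesis
    using a0_solves unfolding a0_def[symmetric] by blast
qed

lemma gS_eq_fS_const_1: "gS P \<beta> S = fS P \<beta> (\<lambda>_. 1) S"
  unfolding gS_def fS_def by simp

lemma wS_eq_rS_const_1: "wS P \<beta> S = rS P \<beta> (\<lambda>_. 1) S"
  unfolding wS_def rS_def gS_eq_fS_const_1 by simp

theorem mainTheorem10:
  fixes P :: "'n::finite \<Rightarrow> 'n \<Rightarrow> real" and \<beta> :: real and R :: "'n \<Rightarrow> real" and S :: "'n set"
  assumes "stochastic P" and "0 < \<beta>" and "\<beta> < 1"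
  shows "(\<exists>!a :: 'n \<Rightarrow> real. \<forall>i. a i = \<beta> * R i + \<beta> * (\<Sum>j\<in>S. P i j * a j))
       \<and> (\<exists>!b :: 'n \<Rightarrow> real. \<forall>i. b i = \<beta> + \<beta> * (\<Sum>j\<in>S. P i j * b j))
       \<and> (\<forall>a b. (\<forall>i. a i = \<beta> * R i + \<beta> * (\<Sum>j\<in>S. P i j * a j))
              \<longrightarrow> (\<forall>i. b i = \<beta> + \<beta> * (\<Sum>j\<in>S. P i j * b j))
              \<longrightarrow> (\<forall>i\<in>S. a i = \<beta> * rS P \<beta> R S i / (1 - \<beta>) \<and> b i = \<beta> * wS P \<beta> S i / (1 - \<beta>))
                \<and> (\<forall>i\<in>-S. a i = \<beta> * rS P \<beta> R S i \<and> b i = \<beta> * wS P \<beta> S i)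
                \<and> (\<forall>i. a i / b i = nuS P \<beta> R S i))"
proof -
  define A where "A = (\<lambda>i. if i \<in> S then \<beta> * rS P \<beta> R S i / (1 - \<beta>) else \<beta> * rS P \<beta> R S i)"
  define B where "B = (\<lambda>i. if i \<in> S then \<beta> * wS P \<beta> S i / (1 - \<beta>) else \<beta> * wS P \<beta> S i)"
  have a_iff: "(\<forall>i. a i = \<beta> * R i + \<beta> * (\<Sum>j\<in>S. P i j * a j)) \<longleftrightarrow> a = A" for a
    unfolding A_def by (rule discounted_equation_iff[OF assms])
  have b_iff: "(\<forall>i. b i = \<beta> + \<beta> * (\<Sum>j\<in>S. P i j * b j)) \<longleftrightarrow> b = B" for b
    using discounted_equation_iff[OF assms, of b "\<lambda>_. 1" S]
    unfolding B_def wS_eq_rS_const_1 by simp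
  have ratio: "A i / B i = nuS P \<beta> R S i" for i
    using assms by (cases "wS P \<beta> S i = 0") (simp_all add: A_def B_def nuS_def)
  show ?thesis
    using ratio by (simp add: a_iff b_iff) (simp add: A_def B_def)
qed

end
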